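(* Let $A$ and $B$ be two $n\times n$ generalized tournament matrices with the same principal minors of orders at most $4$, and let $\alpha>1/2$. Then $A$ is $\alpha$-separable if and only if $B$ is $\alpha$-separable.
   Context: A generalized tournament matrix of order $n$ is a real $n\times n$ matrix $M=(m_{ij})$ with nonnegative entries satisfying $M+M^{t}=J_n-I_n$. Write $[n]=\{1,\ldots,n\}$. For $\alpha>1/2$, $M$ is $\alpha$-separable if there is a partition of $[n]$ into two nonempty sets $X,Y$ such that $m_{xy}=\alpha$ for all $x\in X$, $y\in Y$. *)

theory Defs
  imports "Jordan_Normal_Form.Determinant" "Jordan_Normal_Form.DL_Submatrix"
begin

definition gen_tournament :: "nat \<Rightarrow> real mat \<Rightarrow> bool" where
  "gen_tournament n M \<longleftrightarrow> M \<in> carrier_mat n n \<and>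
     (\<forall>i<n. \<forall>j<n. M $$ (i, j) \<ge> 0) \<and>
     (\<forall>i<n. \<forall>j<n. M $$ (i, j) + M $$ (j, i) = (if i = j then 0 else 1))"

definition alpha_separable :: "nat \<Rightarrow> real \<Rightarrow> real mat \<Rightarrow> bool" where
  "alpha_separable n \<alpha> M \<longleftrightarrow>
     (\<exists>X Y. X \<noteq> {} \<and> Y \<noteq> {} \<and> X \<inter> Y = {} \<and> X \<union> Y = {0..<n} \<and>
        (\<forall>x\<in>X. \<forall>y\<in>Y. M $$ (x, y) = \<alpha>))"

definition principal_minor :: "real mat \<Rightarrow> nat set \<Rightarrow> real" where
  "principal_minor M S = det (submatrix M S S)"

end

theory Submission
  imports Defs
begin

text \<open>Equal principal minors of order 2 force each entry of B to be either the corresponding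
  entry of A or its complement; equal minors of order 3 determine the total weight of the two
  3-cycles on every triple. Suppose X, Y separate A. Calling u \<rightarrow> v an \<alpha>-arc of B when the
  (u, v) entry of B is \<alpha>, every pair across the cut carries an \<alpha>-arc in one direction, and the
  3-cycle weights show that an \<alpha>-arc path u \<rightarrow> v \<rightarrow> w that crosses the cut twice can be shortcut
  by an \<alpha>-arc u \<rightarrow> w. From these two facts alone a purely combinatorial argument produces a
  separation of B: the out-neighbourhoods across the cut are nested, so some vertex \<alpha>-dominates
  the whole opposite side, and the vertices of its side that do so form the first part.\<close>

section \<open>Small determinants and principal minors\<close>

lemma det_mat_1:
  fixes M :: "'a :: comm_ring_1 mat"
  assumes "M \<in> carrier_mat 1 1"
  shows "det M = M $$ (0, 0)"
proof -
  have "mat_delete M 0 0 \<in> carrier_mat 0 0"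
    using mat_delete_carrier[OF assms] by simp
  then show ?thesis
    using laplace_expansion_column[OF assms, of 0] by (simp add: cofactor_def)
qed

lemma det_mat_2:
  fixes M :: "'a :: comm_ring_1 mat"
  assumes "M \<in> carrier_mat 2 2"
  shows "det M = M $$ (0, 0) * M $$ (1, 1) - M $$ (0, 1) * M $$ (1, 0)"
proof -
  have minor: "mat_delete M i 0 \<in> carrier_mat 1 1" for i
    using mat_delete_carrier[OF assms] by simp
  have "det M = M $$ (0, 0) * det (mat_delete M 0 0) - M $$ (1, 0) * det (mat_delete M 1 0)"
    using laplace_expansion_column[OF assms, of 0] by (simp add: numeral_2_eq_2 cofactor_def)
  then show ?thesis
    unfolding det_mat_1[OF minor] using assms by (simp add: mat_delete_def)
qed

lemma det_mat_3:
  fixes M :: "'a :: comm_ring_1 mat"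
  assumes "M \<in> carrier_mat 3 3"
  shows "det M = M $$ (0, 0) * M $$ (1, 1) * M $$ (2, 2) + M $$ (0, 1) * M $$ (1, 2) * M $$ (2, 0)
    + M $$ (0, 2) * M $$ (1, 0) * M $$ (2, 1) - M $$ (0, 2) * M $$ (1, 1) * M $$ (2, 0)
    - M $$ (0, 1) * M $$ (1, 0) * M $$ (2, 2) - M $$ (0, 0) * M $$ (1, 2) * M $$ (2, 1)"
proof -
  have minor: "mat_delete M i 0 \<in> carrier_mat 2 2" for i
    using mat_delete_carrier[OF assms] by simp
  have "det M = M $$ (0, 0) * det (mat_delete M 0 0) - M $$ (1, 0) * det (mat_delete M 1 0)
      + M $$ (2, 0) * det (mat_delete M 2 0)"
    using laplace_expansion_column[OF assms, of 0] by (simp add: lessThan_nat_numeral cofactor_def)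
  then show ?thesis
    unfolding det_mat_2[OF minor] using assms by (simp add: mat_delete_def numeral_2_eq_2 algebra_simps)
qed

lemma pick_pair:
  assumes "i < j"
  shows "pick {i, j} 0 = i" and "pick {i, j} 1 = j"
proof -
  show "pick {i, j} 0 = i"
    using assms by (auto intro!: Least_equality)
  then show "pick {i, j} 1 = j"
    using assms by (auto simp: One_nat_def intro!: Least_equality)
qed

lemma pick_triple:
  assumes "i < j" and "j < k"
  shows "pick {i, j, k} 0 = i" and "pick {i, j, k} 1 = j" and "pick {i, j, k} 2 = k"
proof -
  show "pick {i, j, k} 0 = i"
    using assms by (auto intro!: Least_equality)
  then show "pick {i, j, k} 1 = j"
    using assms by (auto simp: One_nat_def intro!: Least_equality)
  then show "pick {i, j, k} 2 = k"
    using assms by (auto simp: numeral_2_eq_2 intro!: Least_equality)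
qed

lemma principal_submatrix:
  assumes "M \<in> carrier_mat n n" and "S \<subseteq> {0..<n}"
  shows principal_submatrix_carrier: "submatrix M S S \<in> carrier_mat (card S) (card S)"
    and principal_submatrix_index:
      "\<lbrakk>a < card S; b < card S\<rbrakk> \<Longrightarrow> submatrix M S S $$ (a, b) = M $$ (pick S a, pick S b)"
proof -
  have rows: "{i. i < dim_row M \<and> i \<in> S} = S" and cols: "{i. i < dim_col M \<and> i \<in> S} = S"
    using assms by auto
  show "submatrix M S S \<in> carrier_mat (card S) (card S)"
    unfolding carrier_mat_def mem_Collect_eq dim_submatrix rows cols by simp
  show "submatrix M S S $$ (a, b) = M $$ (pick S a, pick S b)" if "a < card S" "b < card S"
    using submatrix_index[of a M S b S] that unfolding rows cols by simp
qed

lemma principal_minor_pair_sorted: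
  assumes M: "M \<in> carrier_mat n n" and "i < j" "j < n" and diag: "\<forall>l<n. M $$ (l, l) = 0"
  shows "principal_minor M {i, j} = - M $$ (i, j) * M $$ (j, i)"
proof -
  have S: "{i, j} \<subseteq> {0..<n}" and card: "card {i, j} = 2"
    using assms by auto
  note entry = principal_submatrix_index[OF M S, unfolded card]
  show ?thesis
    unfolding principal_minor_def det_mat_2[OF principal_submatrix_carrier[OF M S, unfolded card]]
    using entry[of 0 0] entry[of 0 1] entry[of 1 0] entry[of 1 1] pick_pair[OF \<open>i < j\<close>] assms
    by (simp del: pick.simps)
qed

lemma principal_minor_pair:
  assumes "M \<in> carrier_mat n n" and "i < n" "j < n" "i \<noteq> j" and "\<forall>l<n. M $$ (l, l) = 0"
  shows "principal_minor M {i, j} = - M $$ (i, j) * M $$ (j, i)"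
proof (cases "i < j")
  case True
  then show ?thesis
    using principal_minor_pair_sorted assms by blast
next
  case False
  then have "j < i" using assms by simp
  then show ?thesis
    using principal_minor_pair_sorted[of M n j i] assms by (simp add: insert_commute)
qed

definition cycle_weight :: "'a :: comm_ring_1 mat \<Rightarrow> nat \<Rightarrow> nat \<Rightarrow> nat \<Rightarrow> 'a" where
  "cycle_weight M i j k = M $$ (i, j) * M $$ (j, k) * M $$ (k, i) + M $$ (i, k) * M $$ (k, j) * M $$ (j, i)"

lemma cycle_weight_swap:
  shows cycle_weight_swap_12: "cycle_weight M i j k = cycle_weight M j i k"
    and cycle_weight_swap_23: "cycle_weight M i j k = cycle_weight M i k j"
  unfolding cycle_weight_def by (simp_all add: algebra_simps)

lemma principal_minor_triple_sorted:
  assumes M: "M \<in> carrier_mat n n" and "i < j" "j < k" "k < n"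
    and diag: "\<forall>l<n. M $$ (l, l) = 0"
  shows "principal_minor M {i, j, k} = cycle_weight M i j k"
proof -
  have S: "{i, j, k} \<subseteq> {0..<n}" and card: "card {i, j, k} = 3"
    using assms by auto
  note entry = principal_submatrix_index[OF M S, unfolded card]
  note pick = pick_triple[OF \<open>i < j\<close> \<open>j < k\<close>]
  have "M $$ (i, i) = 0" "M $$ (j, j) = 0" "M $$ (k, k) = 0"
    using assms by auto
  then show ?thesis
    unfolding principal_minor_def det_mat_3[OF principal_submatrix_carrier[OF M S, unfolded card]]
    using entry[of 0 0] entry[of 0 1] entry[of 0 2] entry[of 1 0] entry[of 1 1] entry[of 1 2]
      entry[of 2 0] entry[of 2 1] entry[of 2 2] pick
    by (simp del: pick.simps add: cycle_weight_def algebra_simps)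
qed

lemma principal_minor_triple:
  assumes "M \<in> carrier_mat n n" and "i < n" "j < n" "k < n" "distinct [i, j, k]"
    and "\<forall>l<n. M $$ (l, l) = 0"
  shows "principal_minor M {i, j, k} = cycle_weight M i j k"
proof -
  note sorted = principal_minor_triple_sorted[OF assms(1) _ _ _ assms(6)]
  from assms(2-5) consider "i < j" "j < k" | "i < k" "k < j" | "j < i" "i < k"
    | "j < k" "k < i" | "k < i" "i < j" | "k < j" "j < i"
    by fastforce
  then show ?thesis
  proof cases
    case 1
    then show ?thesis using sorted assms by blast
  next
    case 2
    then show ?thesis using sorted[of i k j] assms by (metis insert_commute cycle_weight_swap_23)
  next
    case 3
    then show ?thesis using sorted[of j i k] assms by (metis insert_commute cycle_weight_swap_12)
  next
    case 4
    then show ?thesis using sorted[of j k i] assms by (metis insert_commute cycle_weight_swap)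
  next
    case 5
    then show ?thesis using sorted[of k i j] assms by (metis insert_commute cycle_weight_swap)
  next
    case 6
    then show ?thesis using sorted[of k j i] assms by (metis insert_commute cycle_weight_swap)
  qed
qed

section \<open>Generalized tournaments\<close>

lemma gen_tournament_carrier: "gen_tournament n M \<Longrightarrow> M \<in> carrier_mat n n"
  by (simp add: gen_tournament_def)

lemma gen_tournament_diag:
  assumes "gen_tournament n M" and "i < n"
  shows "M $$ (i, i) = 0"
proof -
  have "M $$ (i, i) + M $$ (i, i) = 0"
    using assms unfolding gen_tournament_def by simp
  then show ?thesis by simp
qed

lemma gen_tournament_converse:
  assumes "gen_tournament n M" and "i < n" "j < n" "i \<noteq> j"
  shows "M $$ (j, i) = 1 - M $$ (i, j)"
proof -
  have "M $$ (i, j) + M $$ (j, i) = 1"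
    using assms unfolding gen_tournament_def by simp
  then show ?thesis by simp
qed

lemma gen_tournament_principal_minor_pair:
  assumes "gen_tournament n M" and "i < n" "j < n" "i \<noteq> j"
  shows "principal_minor M {i, j} = - M $$ (i, j) * (1 - M $$ (i, j))"
  using principal_minor_pair[OF gen_tournament_carrier[OF assms(1)] assms(2-4)]
    gen_tournament_diag[OF assms(1)] gen_tournament_converse[OF assms] by simp

lemma gen_tournament_principal_minor_triple:
  assumes "gen_tournament n M" and "i < n" "j < n" "k < n" "distinct [i, j, k]"
  shows "principal_minor M {i, j, k} = cycle_weight M i j k"
  using principal_minor_triple[OF gen_tournament_carrier[OF assms(1)] assms(2-5)]
    gen_tournament_diag[OF assms(1)] by simp

lemma gen_tournament_entry_eq_or_converse:
  assumes A: "gen_tournament n A" and B: "gen_tournament n B" and "i < n" "j < n" "i \<noteq> j"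
    and "principal_minor A {i, j} = principal_minor B {i, j}"
  shows "B $$ (i, j) = A $$ (i, j) \<or> B $$ (i, j) = 1 - A $$ (i, j)"
proof -
  have "(B $$ (i, j) - A $$ (i, j)) * (B $$ (i, j) - (1 - A $$ (i, j))) = 0"
    using assms(6) unfolding gen_tournament_principal_minor_pair[OF A assms(3-5)]
      gen_tournament_principal_minor_pair[OF B assms(3-5)]
    by (simp add: algebra_simps)
  then show ?thesis by simp
qed

lemma cycle_weight_uniform_middle:
  assumes "gen_tournament n M" and "i < n" "j < n" "k < n" "distinct [i, j, k]"
    and "M $$ (j, i) = M $$ (j, k)"
  shows "cycle_weight M i j k = M $$ (j, i) * (1 - M $$ (j, i))"
proof -
  have converse: "M $$ (i, j) = 1 - M $$ (j, i)" "M $$ (k, j) = 1 - M $$ (j, k)" "M $$ (k, i) = 1 - M $$ (i, k)"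
    using gen_tournament_converse[OF assms(1), of j i] gen_tournament_converse[OF assms(1), of j k]
      gen_tournament_converse[OF assms(1), of i k] assms(2-5)
    by auto
  show ?thesis
    unfolding cycle_weight_def converse assms(6) by (simp add: algebra_simps)
qed

lemma cycle_weight_path_shortcut:
  fixes \<alpha> :: real
  assumes "gen_tournament n M" and "i < n" "j < n" "k < n" "distinct [i, j, k]" and "\<alpha> \<noteq> 1/2"
    and "M $$ (i, j) = \<alpha>" "M $$ (j, k) = \<alpha>" and "cycle_weight M i j k = \<alpha> * (1 - \<alpha>)"
  shows "M $$ (i, k) = \<alpha>"
proof -
  have converse: "M $$ (k, i) = 1 - M $$ (i, k)" "M $$ (k, j) = 1 - \<alpha>" "M $$ (j, i) = 1 - \<alpha>"
    using gen_tournament_converse[OF assms(1), of i k] gen_tournament_converse[OF assms(1), of j k]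
      gen_tournament_converse[OF assms(1), of i j] assms(2-5,7,8)
    by auto
  have "cycle_weight M i j k = \<alpha> * \<alpha> * (1 - M $$ (i, k)) + M $$ (i, k) * (1 - \<alpha>) * (1 - \<alpha>)"
    unfolding cycle_weight_def converse assms(7,8) by simp
  also have "\<dots> = \<alpha> * \<alpha> + (1 - 2 * \<alpha>) * M $$ (i, k)"
    by (simp add: algebra_simps)
  finally have "(1 - 2 * \<alpha>) * M $$ (i, k) = \<alpha> * (1 - \<alpha>) - \<alpha> * \<alpha>"
    using assms(9) by linarith
  also have "\<dots> = (1 - 2 * \<alpha>) * \<alpha>"
    by (simp add: algebra_simps)
  finally show ?thesis
    using assms(6) by simp
qed

section \<open>Bipartitions with shortcuts\<close>

definition dominating_split :: "('a \<Rightarrow> 'a \<Rightarrow> bool) \<Rightarrow> 'a set \<Rightarrow> bool" where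
  "dominating_split E V \<longleftrightarrow>
     (\<exists>X Y. X \<noteq> {} \<and> Y \<noteq> {} \<and> X \<inter> Y = {} \<and> X \<union> Y = V \<and> (\<forall>x\<in>X. \<forall>y\<in>Y. E x y))"

locale shortcut_bipartition =
  fixes E :: "'a \<Rightarrow> 'a \<Rightarrow> bool" and P Q :: "'a set"
  assumes finite_P: "finite P" and finite_Q: "finite Q"
    and P_nonempty: "P \<noteq> {}" and Q_nonempty: "Q \<noteq> {}" and disjoint: "P \<inter> Q = {}"
    and cross_total: "\<lbrakk>p \<in> P; q \<in> Q\<rbrakk> \<Longrightarrow> E p q \<or> E q p"
    and asym: "\<lbrakk>u \<in> P \<union> Q; v \<in> P \<union> Q; u \<noteq> v; E u v\<rbrakk> \<Longrightarrow> \<not> E v u"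
    and shortcut_P: "\<lbrakk>p \<in> P; p' \<in> P; p \<noteq> p'; q \<in> Q; E p q; E q p'\<rbrakk> \<Longrightarrow> E p p'"
    and shortcut_Q: "\<lbrakk>q \<in> Q; q' \<in> Q; q \<noteq> q'; p \<in> P; E q p; E p q'\<rbrakk> \<Longrightarrow> E q q'"
begin

lemma swap: "shortcut_bipartition E Q P"
proof
  fix q p
  assume "q \<in> Q" and "p \<in> P"
  then show "E q p \<or> E p q"
    using cross_total by blast
qed (use finite_P finite_Q P_nonempty Q_nonempty disjoint asym shortcut_P shortcut_Q in auto)

lemma dominating_split_of_dominating_vertex:
  assumes "p\<^sub>0 \<in> P" and "\<forall>q\<in>Q. E p\<^sub>0 q"
  shows "dominating_split E (P \<union> Q)"
proof -
  define X where "X = {p\<in>P. \<forall>q\<in>Q. E p q}"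
  have "E x y" if x: "x \<in> X" and y: "y \<in> (P \<union> Q) - X" for x y
  proof (cases "y \<in> Q")
    case True
    then show ?thesis using x by (simp add: X_def)
  next
    case False
    with y obtain q where "q \<in> Q" "\<not> E y q" "y \<in> P" unfolding X_def by auto
    with x y show ?thesis
      using cross_total shortcut_P[of x y q] unfolding X_def by blast
  qed
  moreover have "X \<noteq> {}" "(P \<union> Q) - X \<noteq> {}"
    using assms Q_nonempty disjoint unfolding X_def by auto
  moreover have "X \<inter> ((P \<union> Q) - X) = {}" "X \<union> ((P \<union> Q) - X) = P \<union> Q"
    unfolding X_def by auto
  ultimately show ?thesis
    unfolding dominating_split_def by (intro exI[of _ X] exI[of _ "(P \<union> Q) - X"]) auto
qed

lemma out_neighbourhoods_nested:
  assumes "p \<in> P" and "p' \<in> P"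
  shows "{q\<in>Q. E p q} \<subseteq> {q\<in>Q. E p' q} \<or> {q\<in>Q. E p' q} \<subseteq> {q\<in>Q. E p q}"
proof (rule ccontr)
  assume "\<not> ?thesis"
  then obtain q q' where q: "q \<in> Q" "E p q" "\<not> E p' q" and q': "q' \<in> Q" "E p' q'" "\<not> E p q'"
    by blast
  then have "p \<noteq> p'" by blast
  have "E p p'"
    using shortcut_P[OF assms \<open>p \<noteq> p'\<close> q(1,2)] cross_total[OF assms(2) q(1)] q(3) by blast
  moreover have "E p' p"
    using shortcut_P[OF assms(2,1) _ q'(1,2)] cross_total[OF assms(1) q'(1)] q'(3) \<open>p \<noteq> p'\<close> by blast
  ultimately show False
    using asym[of p p'] assms \<open>p \<noteq> p'\<close> by simp
qed

lemma dominating_vertex_exists: "(\<exists>p\<in>P. \<forall>q\<in>Q. E p q) \<or> (\<exists>q\<in>Q. \<forall>p\<in>P. E q p)"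
proof -
  define N where "N p = {q\<in>Q. E p q}" for p
  obtain p\<^sub>m where p\<^sub>m: "p\<^sub>m \<in> P" and p\<^sub>m_max: "Max ((\<lambda>p. card (N p)) ` P) = card (N p\<^sub>m)"
    using obtains_MAX[OF finite_P P_nonempty] .
  have card_le: "card (N p) \<le> card (N p\<^sub>m)" if "p \<in> P" for p
    unfolding p\<^sub>m_max[symmetric] using finite_P that by simp
  have below: "N p \<subseteq> N p\<^sub>m" if "p \<in> P" for p
  proof (rule ccontr)
    assume "\<not> N p \<subseteq> N p\<^sub>m"
    then have "N p\<^sub>m \<subset> N p"
      using out_neighbourhoods_nested[OF that p\<^sub>m] unfolding N_def[symmetric] by blast
    then have "card (N p\<^sub>m) < card (N p)"
      using finite_Q by (simp add: N_def psubset_card_mono)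
    with card_le[OF that] show False by simp
  qed
  show ?thesis
  proof (cases "\<forall>q\<in>Q. E p\<^sub>m q")
    case True
    then show ?thesis using p\<^sub>m by blast
  next
    case False
    then obtain q where "q \<in> Q" "\<not> E p\<^sub>m q" by blast
    then have "\<not> E p q" if "p \<in> P" for p
      using below[OF that] unfolding N_def by blast
    then have "\<forall>p\<in>P. E q p"
      using cross_total \<open>q \<in> Q\<close> by blast
    with \<open>q \<in> Q\<close> show ?thesis by blast
  qed
qed

theorem dominating_split_union: "dominating_split E (P \<union> Q)"
  using dominating_vertex_exists dominating_split_of_dominating_vertex
    shortcut_bipartition.dominating_split_of_dominating_vertex[OF swap]
  by (metis Un_commute)

end

section \<open>Transfer of \<alpha>-separability\<close>

lemma alpha_path_shortcut:
  fixes \<alpha> :: real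
  assumes A: "gen_tournament n A" and B: "gen_tournament n B"
    and lt: "i < n" "j < n" "k < n" and dist: "distinct [i, j, k]" and \<alpha>: "\<alpha> \<noteq> 1/2"
    and minor: "principal_minor A {i, j, k} = principal_minor B {i, j, k}"
    and middle: "A $$ (j, i) = A $$ (j, k)" "A $$ (j, i) \<in> {\<alpha>, 1 - \<alpha>}"
    and path: "B $$ (i, j) = \<alpha>" "B $$ (j, k) = \<alpha>"
  shows "B $$ (i, k) = \<alpha>"
proof -
  have "cycle_weight B i j k = cycle_weight A i j k"
    using minor unfolding gen_tournament_principal_minor_triple[OF A lt dist]
      gen_tournament_principal_minor_triple[OF B lt dist] ..
  also have "\<dots> = A $$ (j, i) * (1 - A $$ (j, i))"
    by (rule cycle_weight_uniform_middle[OF A lt dist middle(1)])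
  also have "\<dots> = \<alpha> * (1 - \<alpha>)"
    using middle(2) by (auto simp: mult.commute)
  finally show ?thesis
    using cycle_weight_path_shortcut[OF B lt dist \<alpha> path] by simp
qed

lemma shortcut_bipartition_of_separation:
  fixes \<alpha> :: real
  assumes A: "gen_tournament n A" and B: "gen_tournament n B"
    and minors: "\<And>S. S \<subseteq> {0..<n} \<Longrightarrow> card S \<in> {2, 3} \<Longrightarrow> principal_minor A S = principal_minor B S"
    and \<alpha>: "\<alpha> \<noteq> 1/2"
    and XY: "X \<noteq> {}" "Y \<noteq> {}" "X \<inter> Y = {}" "X \<union> Y = {0..<n}"
    and separated: "\<forall>x\<in>X. \<forall>y\<in>Y. A $$ (x, y) = \<alpha>"
  shows "shortcut_bipartition (\<lambda>u v. B $$ (u, v) = \<alpha>) X Y"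
proof
  show "finite X" "finite Y"
    using XY(4) by (metis finite_Un finite_atLeastLessThan)+
  show "X \<noteq> {}" "Y \<noteq> {}" "X \<inter> Y = {}"
    using XY by auto
next
  fix x y assume x: "x \<in> X" and y: "y \<in> Y"
  then have xy: "x < n" "y < n" "x \<noteq> y"
    using XY by auto
  then have "card {x, y} = 2"
    by simp
  then have "B $$ (x, y) = \<alpha> \<or> B $$ (x, y) = 1 - \<alpha>"
    using gen_tournament_entry_eq_or_converse[OF A B xy] minors xy separated x y by simp
  then show "B $$ (x, y) = \<alpha> \<or> B $$ (y, x) = \<alpha>"
    using gen_tournament_converse[OF B xy] by auto
next
  fix u v assume "u \<in> X \<union> Y" "v \<in> X \<union> Y" "u \<noteq> v" "B $$ (u, v) = \<alpha>"
  then show "B $$ (v, u) \<noteq> \<alpha>"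
    using gen_tournament_converse[OF B, of u v] XY(4) \<alpha> by auto
next
  fix p p' q assume p: "p \<in> X" "p' \<in> X" "p \<noteq> p'" and q: "q \<in> Y"
    and path: "B $$ (p, q) = \<alpha>" "B $$ (q, p') = \<alpha>"
  then have lt: "p < n" "q < n" "p' < n" and dist: "distinct [p, q, p']"
    using XY by auto
  moreover from dist have "card {p, q, p'} = 3"
    by simp
  moreover have "A $$ (q, p) = 1 - \<alpha>" "A $$ (q, p') = 1 - \<alpha>"
    using gen_tournament_converse[OF A, of p q] gen_tournament_converse[OF A, of p' q]
      lt dist separated p q
    by auto
  ultimately show "B $$ (p, p') = \<alpha>"
    using alpha_path_shortcut[OF A B lt dist \<alpha> _ _ _ path] minors by simp
next
  fix q q' p assume q: "q \<in> Y" "q' \<in> Y" "q \<noteq> q'" and p: "p \<in> X"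
    and path: "B $$ (q, p) = \<alpha>" "B $$ (p, q') = \<alpha>"
  then have lt: "q < n" "p < n" "q' < n" and dist: "distinct [q, p, q']"
    using XY by auto
  moreover from dist have "card {q, p, q'} = 3"
    by simp
  moreover have "A $$ (p, q) = \<alpha>" "A $$ (p, q') = \<alpha>"
    using separated p q by auto
  ultimately show "B $$ (q, q') = \<alpha>"
    using alpha_path_shortcut[OF A B lt dist \<alpha> _ _ _ path] minors by simp
qed

lemma alpha_separable_iff_dominating_split:
  "alpha_separable n \<alpha> M \<longleftrightarrow> dominating_split (\<lambda>u v. M $$ (u, v) = \<alpha>) {0..<n}"
  unfolding alpha_separable_def dominating_split_def ..

lemma alpha_separable_transfer:
  fixes \<alpha> :: real
  assumes "gen_tournament n A" and "gen_tournament n B"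
    and "\<And>S. S \<subseteq> {0..<n} \<Longrightarrow> card S \<in> {2, 3} \<Longrightarrow> principal_minor A S = principal_minor B S"
    and "\<alpha> \<noteq> 1/2" and "alpha_separable n \<alpha> A"
  shows "alpha_separable n \<alpha> B"
proof -
  obtain X Y where XY: "X \<noteq> {}" "Y \<noteq> {}" "X \<inter> Y = {}" "X \<union> Y = {0..<n}"
    and "\<forall>x\<in>X. \<forall>y\<in>Y. A $$ (x, y) = \<alpha>"
    using assms(5) unfolding alpha_separable_def by blast
  then interpret shortcut_bipartition "\<lambda>u v. B $$ (u, v) = \<alpha>" X Y
    using shortcut_bipartition_of_separation[OF assms(1-4)] by blast
  show ?thesis
    using dominating_split_union unfolding alpha_separable_iff_dominating_split XY(4) .
qed

theorem corollary5p6: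
  fixes n :: nat and A B :: "real mat" and \<alpha> :: real
  assumes "gen_tournament n A" and "gen_tournament n B"
    and "\<forall>S. S \<subseteq> {0..<n} \<and> S \<noteq> {} \<and> card S \<le> 4 \<longrightarrow>
           principal_minor A S = principal_minor B S"
    and "\<alpha> > 1/2"
  shows "alpha_separable n \<alpha> A \<longleftrightarrow> alpha_separable n \<alpha> B"
proof -
  have minors: "principal_minor A S = principal_minor B S"
    if "S \<subseteq> {0..<n}" "card S \<in> {2, 3}" for S
  proof -
    have "S \<noteq> {}" "card S \<le> 4"
      using that(2) by auto
    then show ?thesis
      using assms(3) that(1) by blast
  qed
  have "\<alpha> \<noteq> 1/2" using assms(4) by simp
  then show ?thesis
    using alpha_separable_transfer[OF assms(1,2) minors]
      alpha_separable_transfer[OF assms(2,1) minors[symmetric]]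
    by blast
qed

end
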